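(* In the standing setting, let $\alpha$ be a bounded operator on $\ell^2(X^\circ)$ such that $\alpha\rho_E(f)=0$ for every $f\in E=C_0(X)$. Then $\alpha=0$.
   Context: $R$ is a rational function of degree $\geq 2$, $X$ its Julia set, Fatou set, or the Riemann sphere, $X\ne\emptyset$, $R:X\to X$. $X^\circ$ is the complement in $X$ of the grand orbit (under $x\sim y\iff R^{\circ m}(x)=R^{\circ n}(y)$ for some $m,n\ge 0$) of all fixed points and branch points of the iterates $R^{\circ n}$, $n\ge1$; it is dense and completely invariant. $(e_x)_{x\in X^\circ}$ is the standard basis of $\ell^2(X^\circ)$ and $\rho_E(f)e_y=\sum_{x\in X^\circ,R(x)=y}f(x)e_x$ for $f\in C_0(X)$. *)

theory Defs
  imports "HOL-Analysis.Analysis" "HOL-Computational_Algebra.Polynomial_Factorial"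
begin

datatype rsphere = Fin complex | Infty

text \<open>Inverse stereographic projection onto the unit sphere of complex x real = R^3.\<close>
definition stereo :: "rsphere \<Rightarrow> complex \<times> real" where
  "stereo p = (case p of
      Fin z \<Rightarrow> (of_real (2 / (1 + (cmod z)\<^sup>2)) * z, ((cmod z)\<^sup>2 - 1) / ((cmod z)\<^sup>2 + 1))
    | Infty \<Rightarrow> (0, 1))"

lemma stereo_snd_lt: "snd (stereo (Fin z)) < 1"
proof -
  have "(cmod z)\<^sup>2 + 1 > 0" by (simp add: add_nonneg_pos)
  then show ?thesis by (simp add: stereo_def divide_less_eq)
qed

lemma stereo_inj: "stereo p = stereo q \<Longrightarrow> p = q"
proof -
  assume eq: "stereo p = stereo q"
  show "p = q"
  proof (cases p; cases q)
    fix z w assume p: "p = Fin z" and q: "q = Fin w"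
    define a where "a = (cmod z)\<^sup>2"
    define b where "b = (cmod w)\<^sup>2"
    have a0: "a \<ge> 0" "b \<ge> 0" by (simp_all add: a_def b_def)
    have "(a - 1) / (a + 1) = (b - 1) / (b + 1)"
      using eq p q by (simp add: stereo_def a_def b_def)
    then have "(a - 1) * (b + 1) = (b - 1) * (a + 1)"
      using a0 by (simp add: divide_simps split: if_splits)
    then have ab: "a = b" by (simp add: algebra_simps)
    have "of_real (2 / (1 + a)) * z = of_real (2 / (1 + b)) * w"
      using eq p q by (simp add: stereo_def a_def b_def)
    moreover have "1 + complex_of_real b \<noteq> 0"
    proof
      assume "1 + complex_of_real b = 0"
      then have "complex_of_real (1 + b) = 0" by simp
      then have "1 + b = 0" by (simp only: of_real_eq_0_iff)
      then show False using a0 by simp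
    qed
    ultimately have "z = w" using ab a0 by simp
    then show ?thesis using p q by simp
  next
    fix z assume "p = Fin z" "q = Infty"
    then show ?thesis using eq stereo_snd_lt[of z] by (simp add: stereo_def)
  next
    fix z assume "p = Infty" "q = Fin z"
    then show ?thesis using eq stereo_snd_lt[of z] by (simp add: stereo_def)
  next
    assume "p = Infty" "q = Infty" then show ?thesis by simp
  qed
qed

instantiation rsphere :: metric_space
begin

definition dist_rsphere :: "rsphere \<Rightarrow> rsphere \<Rightarrow> real" where
  "dist_rsphere p q = norm (stereo p - stereo q)"

definition uniformity_rsphere :: "(rsphere \<times> rsphere) filter" where
  "uniformity_rsphere = (INF e\<in>{0 <..}. principal {(x, y). dist x y < e})"

definition open_rsphere :: "rsphere set \<Rightarrow> bool" where
  "open_rsphere U = (\<forall>x\<in>U. \<forall>\<^sub>F (x', y) in uniformity. x' = x \<longrightarrow> y \<in> U)"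

instance
proof
  show "uniformity = (INF e\<in>{0 <..}. principal {(x, y). dist x y < e} :: (rsphere \<times> rsphere) filter)"
    by (rule uniformity_rsphere_def)
  show "open U = (\<forall>x\<in>U. \<forall>\<^sub>F (x', y) in uniformity. x' = x \<longrightarrow> y \<in> U)" for U :: "rsphere set"
    by (rule open_rsphere_def)
  show "(dist x y = 0) = (x = y)" for x y :: rsphere
    using stereo_inj by (auto simp: dist_rsphere_def)
  show "dist x y \<le> dist x z + dist y z" for x y z :: rsphere
    unfolding dist_rsphere_def
    by (rule norm_diff_triangle_le[OF order_refl]) (simp add: norm_minus_commute)
qed

end

definition rat_map :: "complex poly \<Rightarrow> complex poly \<Rightarrow> rsphere \<Rightarrow> rsphere" where
  "rat_map p q x = (case x of
      Fin z \<Rightarrow> (if poly q z = 0 then Infty else Fin (poly p z / poly q z))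
    | Infty \<Rightarrow> (if degree p > degree q then Infty
               else if degree p = degree q then Fin (lead_coeff p / lead_coeff q)
               else Fin 0))"

definition rat_degree :: "complex poly \<Rightarrow> complex poly \<Rightarrow> nat" where
  "rat_degree p q = max (degree p) (degree q)"

definition branch_point :: "(rsphere \<Rightarrow> rsphere) \<Rightarrow> rsphere \<Rightarrow> bool" where
  "branch_point F z \<longleftrightarrow> \<not> (\<exists>U. open U \<and> z \<in> U \<and> inj_on F U)"

text \<open>Fatou set (Beardon's definition): the set of points having an open neighbourhood on which
  the family of iterates is equicontinuous with respect to the chordal metric.\<close>
definition fatou_set :: "(rsphere \<Rightarrow> rsphere) \<Rightarrow> rsphere set" where
  "fatou_set R = {z. \<exists>U. open U \<and> z \<in> U \<and>
      (\<forall>w\<in>U. \<forall>e>0. \<exists>d>0. \<forall>n. \<forall>u\<in>U. dist u w < d \<longrightarrow> dist ((R ^^ n) u) ((R ^^ n) w) < e)}"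

definition julia_set :: "(rsphere \<Rightarrow> rsphere) \<Rightarrow> rsphere set" where
  "julia_set R = UNIV - fatou_set R"

definition grand_orbit_rel :: "(rsphere \<Rightarrow> rsphere) \<Rightarrow> rsphere \<Rightarrow> rsphere \<Rightarrow> bool" where
  "grand_orbit_rel R x y \<longleftrightarrow> (\<exists>m n. (R ^^ m) x = (R ^^ n) y)"

definition special_points :: "(rsphere \<Rightarrow> rsphere) \<Rightarrow> rsphere set" where
  "special_points R = {z. \<exists>n\<ge>1. (R ^^ n) z = z \<or> branch_point (R ^^ n) z}"

definition Xcirc :: "(rsphere \<Rightarrow> rsphere) \<Rightarrow> rsphere set \<Rightarrow> rsphere set" where
  "Xcirc R X = {x \<in> X. \<not> (\<exists>b\<in>special_points R. grand_orbit_rel R x b)}"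

definition C0 :: "'a::topological_space set \<Rightarrow> ('a \<Rightarrow> complex) set" where
  "C0 X = {f. continuous_on X f \<and>
      (\<forall>e>0. \<exists>K. compact K \<and> K \<subseteq> X \<and> (\<forall>x\<in>X - K. cmod (f x) < e))}"

definition ell2 :: "'a set \<Rightarrow> ('a \<Rightarrow> complex) set" where
  "ell2 S = {v. (\<forall>x. x \<notin> S \<longrightarrow> v x = 0) \<and> (\<lambda>x. (cmod (v x))\<^sup>2) summable_on S}"

definition ell2_norm :: "'a set \<Rightarrow> ('a \<Rightarrow> complex) \<Rightarrow> real" where
  "ell2_norm S v = sqrt (infsum (\<lambda>x. (cmod (v x))\<^sup>2) S)"

definition bounded_op :: "'a set \<Rightarrow> (('a \<Rightarrow> complex) \<Rightarrow> ('a \<Rightarrow> complex)) \<Rightarrow> bool" where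
  "bounded_op S A \<longleftrightarrow>
     (\<forall>v\<in>ell2 S. A v \<in> ell2 S) \<and>
     (\<forall>v\<in>ell2 S. \<forall>w\<in>ell2 S. A (\<lambda>x. v x + w x) = (\<lambda>x. A v x + A w x)) \<and>
     (\<forall>c. \<forall>v\<in>ell2 S. A (\<lambda>x. c * v x) = (\<lambda>x. c * A v x)) \<and>
     (\<exists>C. \<forall>v\<in>ell2 S. ell2_norm S (A v) \<le> C * ell2_norm S v)"

definition basis_vec :: "'a \<Rightarrow> 'a \<Rightarrow> complex" where
  "basis_vec y = (\<lambda>x. if x = y then 1 else 0)"

text \<open>The representation rho_E(f) on l^2(S):
  rho_E(f) e_y = sum over x in S with R x = y of f(x) e_x, i.e. (rho_E(f) v)(x) = f(x) v(R x).\<close>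
definition rhoE :: "('a \<Rightarrow> 'a) \<Rightarrow> 'a set \<Rightarrow> ('a \<Rightarrow> complex) \<Rightarrow> ('a \<Rightarrow> complex) \<Rightarrow> ('a \<Rightarrow> complex)" where
  "rhoE R S f v = (\<lambda>x. if x \<in> S then f x * v (R x) else 0)"

end

theory Submission
  imports Defs "HOL-Complex_Analysis.Complex_Analysis"
begin

text \<open>Because \<alpha> is bounded and linear, it suffices that \<alpha> kills every basis vector \<open>e\<^sub>x\<close>
  with \<open>x \<in> X\<^sup>\<circ>\<close>. Such an x is not a branch point, so R is injective on a neighbourhood U
  of x, and \<open>R x \<in> X\<^sup>\<circ>\<close> since R maps X into itself. A continuous tent function f with
  \<open>f x = 1\<close>, supported in a ball inside U, then satisfies \<open>\<rho>\<^sub>E(f) e\<^sub>R\<^sub>x = e\<^sub>x\<close>, hence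
  \<open>\<alpha> e\<^sub>x = \<alpha> (\<rho>\<^sub>E(f) e\<^sub>R\<^sub>x) = 0\<close>. The tent function lies in \<open>C\<^sub>0(X)\<close> because X is closed or
  open in the compact sphere. Forward invariance of X rests on R being continuous and open;
  openness follows from the open mapping theorem applied in the charts z and 1/z.\<close>

section \<open>Charts of the Riemann sphere\<close>

lemma dist_rsphere_stereo: "dist x y = dist (stereo x) (stereo y)"
  by (simp add: dist_rsphere_def dist_norm)

lemma continuous_on_stereo: "continuous_on S stereo"
  unfolding continuous_on_iff dist_rsphere_stereo[symmetric] by blast

lemma continuous_on_rsphereI:
  fixes g :: "'a::metric_space \<Rightarrow> rsphere"
  assumes "continuous_on S (\<lambda>x. stereo (g x))"
  shows "continuous_on S g"
  using assms by (simp add: continuous_on_iff dist_rsphere_stereo)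

definition inv_chart :: "complex \<Rightarrow> rsphere" where
  "inv_chart z = (if z = 0 then Infty else Fin (1 / z))"

lemma one_add_norm_power2_neq_0 [simp]:
  "1 + (cmod z)\<^sup>2 \<noteq> 0" "(cmod z)\<^sup>2 + 1 \<noteq> 0" "1 + (complex_of_real (cmod z))\<^sup>2 \<noteq> 0"
proof -
  show *: "1 + (cmod z)\<^sup>2 \<noteq> 0"
    by (metis add_pos_nonneg zero_le_power2 zero_less_one less_irrefl)
  then show "(cmod z)\<^sup>2 + 1 \<noteq> 0" by (simp add: add.commute)
  have "1 + (complex_of_real (cmod z))\<^sup>2 = of_real (1 + (cmod z)\<^sup>2)" by simp
  then show "1 + (complex_of_real (cmod z))\<^sup>2 \<noteq> 0" using * by (metis of_real_eq_0_iff)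
qed

lemma stereo_Fin:
  "stereo (Fin z) = (of_real (2 / (1 + (cmod z)\<^sup>2)) * z, ((cmod z)\<^sup>2 - 1) / ((cmod z)\<^sup>2 + 1))"
  by (simp add: stereo_def)

lemma stereo_inv_chart:
  "stereo (inv_chart z) = (of_real (2 / (1 + (cmod z)\<^sup>2)) * cnj z, (1 - (cmod z)\<^sup>2) / (1 + (cmod z)\<^sup>2))"
proof (cases "z = 0")
  case True
  then show ?thesis by (simp add: inv_chart_def stereo_def)
next
  case False
  define r where "r = (cmod z)\<^sup>2"
  have r: "r > 0" using False by (simp add: r_def)
  have inverse: "1 / z = cnj z / of_real r"
  proof -
    have "complex_of_real r = z * cnj z" unfolding r_def by (rule complex_norm_square)
    then show ?thesis using False by (simp add: field_simps)
  qed
  have norm_inverse: "(cmod (1 / z))\<^sup>2 = 1 / r" by (simp add: norm_divide r_def power_divide)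
  have r1: "1 + r > 0" "r + 1 > 0" "r \<noteq> 0" "r + r * r > 0" "r * r + r > 0"
    using r by (auto simp: add_pos_pos)
  have first: "2 / (1 + 1 / r) / r = 2 / (1 + r)"
  proof -
    have "1 + 1 / r = (1 + r) / r" using r1 by (simp add: field_simps)
    then show ?thesis using r1 by (simp add: field_simps)
  qed
  have second: "(1 / r - 1) / (1 / r + 1) = (1 - r) / (1 + r)"
  proof -
    have "1 / r - 1 = (1 - r) / r" "1 / r + 1 = (1 + r) / r" using r1 by (simp_all add: field_simps)
    then show ?thesis using r1 by (simp add: field_simps)
  qed
  have "of_real (2 / (1 + 1 / r)) * (1 / z) = of_real (2 / (1 + r)) * cnj z"
    unfolding inverse first[symmetric] by simp
  then show ?thesis
    using False by (simp add: inv_chart_def stereo_Fin norm_inverse second r_def[symmetric])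
qed

lemma continuous_on_Fin: "continuous_on S Fin"
  by (rule continuous_on_rsphereI) (simp add: stereo_Fin, intro continuous_intros, auto)

lemma continuous_on_inv_chart: "continuous_on S inv_chart"
  by (rule continuous_on_rsphereI) (simp only: stereo_inv_chart, intro continuous_intros, auto)

text \<open>Stereographic projections of the unit sphere from the north pole \<open>(0, 1)\<close> and, followed
  by complex conjugation, from the south pole \<open>(0, -1)\<close>; they invert Fin and inv_chart.\<close>

definition north_proj :: "complex \<times> real \<Rightarrow> complex" where
  "north_proj s = fst s / of_real (1 - snd s)"

definition south_proj :: "complex \<times> real \<Rightarrow> complex" where
  "south_proj s = cnj (fst s) / of_real (1 + snd s)"

lemma one_add_of_real_eq_0_iff: "1 + complex_of_real b = 0 \<longleftrightarrow> b = -1"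
  by (simp add: complex_eq_iff; linarith)

lemma north_proj_stereo_Fin: "north_proj (stereo (Fin w)) = w"
proof -
  define r where "r = (cmod w)\<^sup>2"
  have r: "r \<ge> 0" by (simp add: r_def)
  have e: "1 - (r - 1) / (r + 1) = 2 / (1 + r)" using r by (simp add: field_simps)
  have "2 / (1 + r) \<noteq> 0" using r by simp
  then have "complex_of_real (2 / (1 + r)) \<noteq> 0" by (metis of_real_eq_0_iff)
  then show ?thesis unfolding north_proj_def stereo_Fin r_def[symmetric]
    using r one_add_of_real_eq_0_iff[of r] by (auto simp: e)
qed

lemma Fin_north_proj_stereo: "snd (stereo y) < 1 \<Longrightarrow> Fin (north_proj (stereo y)) = y"
  by (cases y) (simp_all only: north_proj_stereo_Fin, simp add: stereo_def)

lemma south_proj_stereo_inv_chart: "south_proj (stereo (inv_chart w)) = w"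
proof (cases "w = 0")
  case True
  then show ?thesis by (simp add: inv_chart_def stereo_def south_proj_def)
next
  case False
  define r where "r = (cmod w)\<^sup>2"
  have r: "r \<ge> 0" by (simp add: r_def)
  have e: "1 + (1 - r) / (1 + r) = 2 / (1 + r)" using r by (simp add: field_simps)
  have "2 / (1 + r) \<noteq> 0" using r by simp
  then have "complex_of_real (2 / (1 + r)) \<noteq> 0" by (metis of_real_eq_0_iff)
  then show ?thesis unfolding south_proj_def stereo_inv_chart r_def[symmetric]
    using r one_add_of_real_eq_0_iff[of r] by (auto simp: e)
qed

lemma inv_chart_south_proj_stereo:
  assumes "snd (stereo y) > -1" shows "inv_chart (south_proj (stereo y)) = y"
proof (cases y)
  case (Fin w)
  define r where "r = (cmod w)\<^sup>2"
  have "r \<ge> 0" by (simp add: r_def)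
  moreover have "(r - 1) / (r + 1) > -1" using assms Fin by (simp add: stereo_def r_def)
  ultimately have "r > 0" by (simp add: field_simps)
  then have "inv_chart (1 / w) = y" using Fin by (auto simp: inv_chart_def r_def)
  then show ?thesis using south_proj_stereo_inv_chart by metis
next
  case Infty
  then show ?thesis by (simp add: inv_chart_def stereo_def south_proj_def)
qed

lemma snd_stereo_inv_chart_gt: "snd (stereo (inv_chart z)) > -1"
  by (simp add: stereo_inv_chart field_simps add_pos_nonneg)

lemma open_image_chart:
  fixes g :: "complex \<Rightarrow> rsphere" and \<phi> :: "complex \<times> real \<Rightarrow> complex"
  assumes T: "open T" "continuous_on T \<phi>"
    and chart: "\<And>z. stereo (g z) \<in> T" "\<And>z. \<phi> (stereo (g z)) = z"
      "\<And>y. stereo y \<in> T \<Longrightarrow> g (\<phi> (stereo y)) = y"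
    and V: "open V"
  shows "open (g ` V)"
proof -
  have "g ` V = stereo -` (\<phi> -` V \<inter> T)"
  proof
    show "g ` V \<subseteq> stereo -` (\<phi> -` V \<inter> T)" using chart(1,2) by auto
    show "stereo -` (\<phi> -` V \<inter> T) \<subseteq> g ` V" using chart(3) by (metis IntE imageI subsetI vimageE)
  qed
  moreover have "open (\<phi> -` V \<inter> T)" using T V continuous_on_open_vimage by blast
  ultimately show ?thesis using open_vimage[OF _ continuous_on_stereo] by metis
qed

lemma open_image_Fin: "open V \<Longrightarrow> open (Fin ` V)"
proof (rule open_image_chart[where T = "{s. snd s < 1}" and \<phi> = north_proj])
  show "continuous_on {s. snd s < 1} north_proj"
    unfolding north_proj_def by (intro continuous_intros) auto
  show "open {s :: complex \<times> real. snd s < 1}" by (intro open_Collect_less continuous_intros)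
qed (auto simp: stereo_snd_lt north_proj_stereo_Fin Fin_north_proj_stereo)

lemma open_image_inv_chart: "open V \<Longrightarrow> open (inv_chart ` V)"
proof (rule open_image_chart[where T = "{s. -1 < snd s}" and \<phi> = south_proj])
  show "continuous_on {s. -1 < snd s} south_proj"
    unfolding south_proj_def by (intro continuous_intros) (auto simp: one_add_of_real_eq_0_iff)
  show "open {s :: complex \<times> real. -1 < snd s}" by (intro open_Collect_less continuous_intros)
qed (auto simp: snd_stereo_inv_chart_gt south_proj_stereo_inv_chart inv_chart_south_proj_stereo)

lemma rsphere_cases_chart: "y \<in> range Fin \<or> y \<in> range inv_chart"
  by (cases y) (auto simp: inv_chart_def intro: range_eqI[of _ _ 0])

lemma compact_UNIV_rsphere: "compact (UNIV :: rsphere set)"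
proof -
  have "UNIV = Fin ` cball 0 1 \<union> inv_chart ` cball 0 1"
  proof (intro set_eqI iffI UNIV_I)
    fix y :: rsphere
    show "y \<in> Fin ` cball 0 1 \<union> inv_chart ` cball 0 1"
    proof (cases y)
      case (Fin w)
      show ?thesis
      proof (cases "cmod w \<le> 1")
        case True
        then show ?thesis using Fin by auto
      next
        case False
        then have "inv_chart (1 / w) = y" "1 / w \<in> cball 0 1"
          using Fin by (auto simp: inv_chart_def norm_divide divide_le_eq)
        then show ?thesis by blast
      qed
    next
      case Infty
      then have "y = inv_chart 0" by (simp add: inv_chart_def)
      then show ?thesis by auto
    qed
  qed
  moreover have "compact (Fin ` cball 0 1)" "compact (inv_chart ` cball 0 1)"
    by (intro compact_continuous_image continuous_on_Fin continuous_on_inv_chart compact_cball)+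
  ultimately show ?thesis by (metis compact_Un)
qed

definition rat_fun :: "complex poly \<Rightarrow> complex poly \<Rightarrow> complex \<Rightarrow> rsphere" where
  "rat_fun P Q z = (if poly Q z = 0 then Infty else Fin (poly P z / poly Q z))"

definition proportional :: "complex poly \<Rightarrow> complex poly \<Rightarrow> bool" where
  "proportional P Q \<longleftrightarrow> (\<exists>k. P = smult k Q \<or> Q = smult k P)"

lemma proportional_commute: "proportional P Q \<longleftrightarrow> proportional Q P"
  by (auto simp: proportional_def)

lemma poly_eq_if_eq_on_nonzero:
  fixes A B :: "complex poly"
  assumes "\<And>w. w \<noteq> 0 \<Longrightarrow> poly A w = poly B w"
  shows "A = B"
proof -
  have "UNIV - {0} \<subseteq> {w. poly (A - B) w = 0}" using assms by auto
  moreover have "infinite (UNIV - {0 :: complex})" by (simp add: infinite_UNIV_char_0)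
  ultimately have "A - B = 0" using poly_roots_finite finite_subset by blast
  then show ?thesis by simp
qed

lemma proportional_if_quotient_constant_on_ball:
  fixes A B :: "complex poly"
  assumes "0 < s" "\<And>z. z \<in> ball c s \<Longrightarrow> poly B z \<noteq> 0"
    and "(\<lambda>z. poly A z / poly B z) constant_on ball c s"
  shows "proportional A B"
proof -
  obtain k where k: "\<And>z. z \<in> ball c s \<Longrightarrow> poly A z / poly B z = k"
    using assms(3) unfolding constant_on_def by blast
  have "ball c s \<subseteq> {z. poly (A - smult k B) z = 0}"
    using k assms(2) by (auto simp: field_simps)
  moreover have "infinite (ball c s)"
    using uncountable_ball[OF assms(1)] countable_finite by blast
  ultimately have "A - smult k B = 0"
    using poly_roots_finite finite_subset by blast
  then show ?thesis by (auto simp: proportional_def)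
qed

lemma poly_quotient_near:
  fixes A B :: "complex poly"
  assumes "poly B c \<noteq> 0"
  obtains r where "r > 0" "\<And>z. z \<in> ball c r \<Longrightarrow> poly B z \<noteq> 0"
    "(\<lambda>z. poly A z / poly B z) holomorphic_on ball c r"
    "\<And>s. 0 < s \<Longrightarrow> s \<le> r \<Longrightarrow> (\<lambda>z. poly A z / poly B z) constant_on ball c s \<Longrightarrow> proportional A B"
proof -
  have "open {z. poly B z \<noteq> 0}"
    using open_Collect_neq[of "poly B" "\<lambda>_. 0"] by (simp add: continuous_on_poly)
  then obtain r where r: "r > 0" "ball c r \<subseteq> {z. poly B z \<noteq> 0}"
    using assms open_contains_ball by blast
  show ?thesis
  proof (rule that[OF r(1)])
    show "(\<lambda>z. poly A z / poly B z) holomorphic_on ball c r"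
      using r(2) by (intro holomorphic_intros) auto
    show "proportional A B" if "0 < s" "s \<le> r" "(\<lambda>z. poly A z / poly B z) constant_on ball c s" for s
    proof (rule proportional_if_quotient_constant_on_ball[OF that(1) _ that(3)])
      show "poly B z \<noteq> 0" if "z \<in> ball c s" for z
      proof -
        have "z \<in> ball c r" using that \<open>s \<le> r\<close> by simp
        then show ?thesis using r(2) by blast
      qed
    qed
  qed (use r(2) in auto)
qed

lemma rat_fun_local_chart:
  assumes "poly P c \<noteq> 0 \<or> poly Q c \<noteq> 0"
  obtains r h g where "r > 0" "g = Fin \<or> g = inv_chart" "h holomorphic_on ball c r"
    "\<And>z. z \<in> ball c r \<Longrightarrow> rat_fun P Q z = g (h z)"
    "\<And>s. 0 < s \<Longrightarrow> s \<le> r \<Longrightarrow> h constant_on ball c s \<Longrightarrow> proportional P Q"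
proof (cases "poly Q c = 0")
  case False
  obtain r where r: "r > 0" "\<And>z. z \<in> ball c r \<Longrightarrow> poly Q z \<noteq> 0"
    "(\<lambda>z. poly P z / poly Q z) holomorphic_on ball c r"
    "\<And>s. 0 < s \<Longrightarrow> s \<le> r \<Longrightarrow> (\<lambda>z. poly P z / poly Q z) constant_on ball c s \<Longrightarrow> proportional P Q"
    using poly_quotient_near[OF False] by metis
  show ?thesis
    by (rule that[of r Fin "\<lambda>z. poly P z / poly Q z", OF r(1) _ r(3) _ r(4)]) (use r(2) in \<open>auto simp: rat_fun_def\<close>)
next
  case True
  then have "poly P c \<noteq> 0" using assms by blast
  then obtain r where r: "r > 0" "\<And>z. z \<in> ball c r \<Longrightarrow> poly P z \<noteq> 0"
    "(\<lambda>z. poly Q z / poly P z) holomorphic_on ball c r"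
    "\<And>s. 0 < s \<Longrightarrow> s \<le> r \<Longrightarrow> (\<lambda>z. poly Q z / poly P z) constant_on ball c s \<Longrightarrow> proportional Q P"
    using poly_quotient_near by metis
  show ?thesis
    by (rule that[of r inv_chart "\<lambda>z. poly Q z / poly P z", OF r(1) _ r(3)])
       (use r(2,4) in \<open>auto simp: rat_fun_def inv_chart_def proportional_commute\<close>)
qed

lemma continuous_on_rat_fun:
  assumes "\<And>z. poly P z \<noteq> 0 \<or> poly Q z \<noteq> 0"
  shows "continuous_on UNIV (rat_fun P Q)"
proof (rule continuous_at_imp_continuous_on, intro ballI)
  fix c :: complex
  obtain r h g where r: "r > 0" "g = Fin \<or> g = inv_chart" "h holomorphic_on ball c r"
    "\<And>z. z \<in> ball c r \<Longrightarrow> rat_fun P Q z = g (h z)"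
    using rat_fun_local_chart[OF assms] by metis
  have "continuous_on UNIV g" using r(2) continuous_on_Fin continuous_on_inv_chart by blast
  then have "continuous_on (ball c r) (g \<circ> h)"
    using continuous_on_compose[OF holomorphic_on_imp_continuous_on[OF r(3)]]
      continuous_on_subset by blast
  then have "continuous_on (ball c r) (rat_fun P Q)"
    by (rule continuous_on_cong[THEN iffD1, rotated 2]) (use r(4) in auto)
  then have "\<forall>x\<in>ball c r. isCont (rat_fun P Q) x"
    using continuous_on_eq_continuous_at[OF open_ball] by blast
  then show "isCont (rat_fun P Q) c" using r(1) by simp
qed

lemma open_image_rat_fun:
  assumes "\<And>z. poly P z \<noteq> 0 \<or> poly Q z \<noteq> 0" and "\<not> proportional P Q" and "open V"
  shows "open (rat_fun P Q ` V)"
proof (rule Topological_Spaces.openI)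
  fix y assume "y \<in> rat_fun P Q ` V"
  then obtain c where c: "c \<in> V" "y = rat_fun P Q c" by blast
  obtain r0 where r0: "r0 > 0" "ball c r0 \<subseteq> V" using assms(3) c(1) open_contains_ball by blast
  obtain r h g where r: "r > 0" "g = Fin \<or> g = inv_chart" "h holomorphic_on ball c r"
    "\<And>z. z \<in> ball c r \<Longrightarrow> rat_fun P Q z = g (h z)"
    "\<And>s. 0 < s \<Longrightarrow> s \<le> r \<Longrightarrow> h constant_on ball c s \<Longrightarrow> proportional P Q"
    using rat_fun_local_chart[OF assms(1)] by metis
  define s where "s = min r r0"
  have s: "s > 0" "s \<le> r" "ball c s \<subseteq> V" "ball c s \<subseteq> ball c r"
    using r0 r(1) by (auto simp: s_def)
  have "\<not> h constant_on ball c s" using r(5) s assms(2) by blast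
  moreover have "h holomorphic_on ball c s" using r(3) s(4) holomorphic_on_subset by blast
  ultimately have "open (h ` ball c s)"
    using open_mapping_thm[OF _ open_ball connected_ball open_ball order_refl] by blast
  then have "open (g ` h ` ball c s)" using r(2) open_image_Fin open_image_inv_chart by blast
  moreover have "g ` h ` ball c s = rat_fun P Q ` ball c s"
    unfolding image_comp using r(4) s(4) by (intro image_cong) auto
  then have "g ` h ` ball c s \<subseteq> rat_fun P Q ` V" using s(3) by auto
  moreover have "y \<in> g ` h ` ball c s"
  proof -
    have "c \<in> ball c s" using s(1) by simp
    then show ?thesis using c(2) r(1) r(4)[of c] by auto
  qed
  ultimately show "\<exists>T. open T \<and> y \<in> T \<and> T \<subseteq> rat_fun P Q ` V" by blast
qed

text \<open>The chart \<open>1/z\<close> at \<open>\<infinity>\<close> turns \<open>p/q\<close> into the quotient of the reciprocal polynomials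
  \<open>z\<^sup>n p(1/z)\<close> and \<open>z\<^sup>n q(1/z)\<close>, where \<open>n\<close> is the degree of the rational map.\<close>

definition recip_poly :: "nat \<Rightarrow> complex poly \<Rightarrow> complex poly" where
  "recip_poly n A = monom 1 (n - degree A) * reflect_poly A"

lemma poly_recip_poly:
  assumes "z \<noteq> 0" "degree A \<le> n"
  shows "poly (recip_poly n A) z = z ^ n * poly A (1 / z)"
proof -
  have "poly (recip_poly n A) z = z ^ (n - degree A) * (z ^ degree A * poly A (inverse z))"
    using assms by (simp add: recip_poly_def poly_monom poly_reflect_poly_nz)
  also have "\<dots> = z ^ n * poly A (1 / z)"
    using assms(2) by (simp add: mult.assoc[symmetric] power_add[symmetric] inverse_eq_divide)
  finally show ?thesis .
qed

lemma poly_recip_poly_0: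
  "degree A \<le> n \<Longrightarrow> poly (recip_poly n A) 0 = (if n = degree A then lead_coeff A else 0)"
  by (auto simp: recip_poly_def poly_monom)

lemma smult_if_recip_poly_eq_smult:
  assumes "degree A \<le> n" "degree B \<le> n" "recip_poly n A = smult k (recip_poly n B)"
  shows "A = smult k B"
proof (rule poly_eq_if_eq_on_nonzero)
  fix w :: complex assume w: "w \<noteq> 0"
  have "poly (recip_poly n A) (1 / w) = poly (smult k (recip_poly n B)) (1 / w)"
    using assms(3) by simp
  then show "poly A w = poly (smult k B) w"
    using w assms(1,2) by (simp add: poly_recip_poly)
qed

lemma proportional_if_recip_poly_proportional:
  assumes "degree A \<le> n" "degree B \<le> n" "proportional (recip_poly n A) (recip_poly n B)"
  shows "proportional A B"
  using assms smult_if_recip_poly_eq_smult[OF assms(1,2)] smult_if_recip_poly_eq_smult[OF assms(2,1)]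
  unfolding proportional_def by metis

lemma degree_le_rat_degree: "degree p \<le> rat_degree p q" "degree q \<le> rat_degree p q"
  by (simp_all add: rat_degree_def)

locale rational_map =
  fixes p q :: "complex poly"
  assumes q_nonzero: "q \<noteq> 0" and coprime: "coprime p q" and rat_degree: "rat_degree p q \<ge> 2"
begin

abbreviation R :: "rsphere \<Rightarrow> rsphere" where "R \<equiv> rat_map p q"

abbreviation p_recip :: "complex poly" where "p_recip \<equiv> recip_poly (rat_degree p q) p"

abbreviation q_recip :: "complex poly" where "q_recip \<equiv> recip_poly (rat_degree p q) q"

lemma p_nonzero: "p \<noteq> 0"
proof
  assume "p = 0"
  then have "is_unit q" using coprime by simp
  then have "degree q = 0" using is_unit_iff_degree q_nonzero by blast
  then show False using rat_degree \<open>p = 0\<close> by (simp add: rat_degree_def)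
qed

lemma no_common_root: "poly p z \<noteq> 0 \<or> poly q z \<noteq> 0"
proof (rule ccontr)
  assume "\<not> (poly p z \<noteq> 0 \<or> poly q z \<noteq> 0)"
  then have "[:-z, 1:] dvd p" "[:-z, 1:] dvd q" using poly_eq_0_iff_dvd by auto
  then have "is_unit [:-z, 1:]" by (rule coprime_common_divisor[OF coprime])
  then show False by (simp add: is_unit_iff_degree)
qed

lemma not_proportional: "\<not> proportional p q"
proof
  assume "proportional p q"
  then obtain k where "p = smult k q \<or> q = smult k p" by (auto simp: proportional_def)
  then show False
  proof
    assume pq: "p = smult k q"
    then have "is_unit q" using coprime_common_divisor[OF coprime, of q] by (simp add: dvd_smult)
    then have "degree q = 0" using is_unit_iff_degree q_nonzero by blast
    then show False using rat_degree pq by (simp add: rat_degree_def split: if_splits)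
  next
    assume qp: "q = smult k p"
    then have "is_unit p" using coprime_common_divisor[OF coprime, of p] by (simp add: dvd_smult)
    then have "degree p = 0" using is_unit_iff_degree p_nonzero by blast
    then show False using rat_degree qp by (simp add: rat_degree_def split: if_splits)
  qed
qed

lemma rat_map_Fin: "R (Fin z) = rat_fun p q z"
  by (simp add: rat_map_def rat_fun_def)

lemma rat_map_inv_chart: "R (inv_chart z) = rat_fun p_recip q_recip z"
proof (cases "z = 0")
  case False
  then show ?thesis
    by (simp add: inv_chart_def rat_map_def rat_fun_def poly_recip_poly degree_le_rat_degree)
next
  case True
  then show ?thesis using q_nonzero
    by (auto simp: inv_chart_def rat_map_def rat_fun_def poly_recip_poly_0 degree_le_rat_degree)
       (auto simp: rat_degree_def)
qed

lemma recip_no_common_root: "poly p_recip z \<noteq> 0 \<or> poly q_recip z \<noteq> 0"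
proof (cases "z = 0")
  case False
  then show ?thesis
    using no_common_root[of "1 / z"] by (simp add: poly_recip_poly degree_le_rat_degree)
next
  case True
  then show ?thesis using p_nonzero q_nonzero
    by (auto simp: poly_recip_poly_0 degree_le_rat_degree rat_degree_def max_def)
qed

lemma recip_not_proportional: "\<not> proportional p_recip q_recip"
  using proportional_if_recip_poly_proportional degree_le_rat_degree not_proportional by blast

lemma open_image_rat_map: "open V \<Longrightarrow> open (R ` V)"
proof -
  assume V: "open V"
  have "R ` V = rat_fun p q ` (Fin -` V) \<union> rat_fun p_recip q_recip ` (inv_chart -` V)"
  proof
    show "R ` V \<subseteq> rat_fun p q ` (Fin -` V) \<union> rat_fun p_recip q_recip ` (inv_chart -` V)"
    proof
      fix u assume "u \<in> R ` V"
      then obtain y where y: "y \<in> V" "u = R y" by blast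
      from rsphere_cases_chart[of y]
      show "u \<in> rat_fun p q ` (Fin -` V) \<union> rat_fun p_recip q_recip ` (inv_chart -` V)"
        using y rat_map_Fin rat_map_inv_chart by auto
    qed
    show "rat_fun p q ` (Fin -` V) \<union> rat_fun p_recip q_recip ` (inv_chart -` V) \<subseteq> R ` V"
      by (auto simp flip: rat_map_Fin rat_map_inv_chart)
  qed
  moreover have "open (rat_fun p q ` (Fin -` V))"
    by (intro open_image_rat_fun no_common_root not_proportional open_vimage V continuous_on_Fin)
  moreover have "open (rat_fun p_recip q_recip ` (inv_chart -` V))"
    by (intro open_image_rat_fun recip_no_common_root recip_not_proportional open_vimage V
        continuous_on_inv_chart)
  ultimately show ?thesis by (simp add: open_Un)
qed

lemma continuous_on_rat_map: "continuous_on UNIV R"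
proof -
  have "open (R -` B)" if B: "open B" for B
  proof -
    have "R -` B = Fin ` (rat_fun p q -` B) \<union> inv_chart ` (rat_fun p_recip q_recip -` B)"
    proof
      show "R -` B \<subseteq> Fin ` (rat_fun p q -` B) \<union> inv_chart ` (rat_fun p_recip q_recip -` B)"
      proof
        fix y assume "y \<in> R -` B"
        from rsphere_cases_chart[of y]
        show "y \<in> Fin ` (rat_fun p q -` B) \<union> inv_chart ` (rat_fun p_recip q_recip -` B)"
          using \<open>y \<in> R -` B\<close> rat_map_Fin rat_map_inv_chart by auto
      qed
      show "Fin ` (rat_fun p q -` B) \<union> inv_chart ` (rat_fun p_recip q_recip -` B) \<subseteq> R -` B"
        by (auto simp: rat_map_Fin rat_map_inv_chart)
    qed
    moreover have "open (Fin ` (rat_fun p q -` B))"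
      by (intro open_image_Fin open_vimage B continuous_on_rat_fun no_common_root)
    moreover have "open (inv_chart ` (rat_fun p_recip q_recip -` B))"
      by (intro open_image_inv_chart open_vimage B continuous_on_rat_fun recip_no_common_root)
    ultimately show ?thesis by (simp add: open_Un)
  qed
  then show ?thesis using continuous_on_open_vimage[of UNIV R] by simp
qed

end

section \<open>Forward invariance of the Fatou set, the Julia set and \<open>X\<^sup>\<circ>\<close>\<close>

definition equicontinuous_iterates :: "(rsphere \<Rightarrow> rsphere) \<Rightarrow> rsphere set \<Rightarrow> bool" where
  "equicontinuous_iterates R U \<longleftrightarrow>
     (\<forall>w\<in>U. \<forall>e>0. \<exists>d>0. \<forall>n. \<forall>u\<in>U. dist u w < d \<longrightarrow> dist ((R ^^ n) u) ((R ^^ n) w) < e)"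

lemma fatou_set_iff: "z \<in> fatou_set R \<longleftrightarrow> (\<exists>U. open U \<and> z \<in> U \<and> equicontinuous_iterates R U)"
  by (simp add: fatou_set_def equicontinuous_iterates_def)

lemma open_fatou_set: "open (fatou_set R)"
proof (rule Topological_Spaces.openI)
  fix z assume "z \<in> fatou_set R"
  then obtain U where U: "open U" "z \<in> U" "equicontinuous_iterates R U" using fatou_set_iff by blast
  then have "U \<subseteq> fatou_set R" using fatou_set_iff by blast
  then show "\<exists>T. open T \<and> z \<in> T \<and> T \<subseteq> fatou_set R" using U by blast
qed

lemma closed_julia_set: "closed (julia_set R)"
  by (simp add: julia_set_def Diff_eq closed_Compl open_fatou_set)

lemma fatou_set_image:
  assumes open_map: "\<And>V. open V \<Longrightarrow> open (R ` V)" and x: "x \<in> fatou_set R"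
  shows "R x \<in> fatou_set R"
proof -
  obtain U where U: "open U" "x \<in> U" "equicontinuous_iterates R U" using x fatou_set_iff by blast
  have "equicontinuous_iterates R (R ` U)"
    unfolding equicontinuous_iterates_def
  proof (intro ballI allI impI)
    fix w' e assume "w' \<in> R ` U" and e: "(0::real) < e"
    then obtain w where w: "w \<in> U" "w' = R w" by blast
    obtain d where d: "d > 0" "\<And>n u. u \<in> U \<Longrightarrow> dist u w < d \<Longrightarrow> dist ((R ^^ n) u) ((R ^^ n) w) < e"
      using U(3) w(1) e unfolding equicontinuous_iterates_def by blast
    have "open (R ` (U \<inter> ball w d))" by (intro open_map open_Int U(1) open_ball)
    moreover have "w' \<in> R ` (U \<inter> ball w d)" using w d(1) by auto
    ultimately obtain d' where d': "d' > 0" "ball w' d' \<subseteq> R ` (U \<inter> ball w d)"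
      using open_contains_ball by blast
    show "\<exists>d>0. \<forall>n. \<forall>u'\<in>R ` U. dist u' w' < d \<longrightarrow> dist ((R ^^ n) u') ((R ^^ n) w') < e"
    proof (intro exI[of _ d'] conjI d'(1) allI ballI impI)
      fix n u' assume "dist u' w' < d'"
      then have "u' \<in> R ` (U \<inter> ball w d)" using d'(2) by (auto simp: dist_commute)
      then obtain u where u: "u \<in> U" "dist u w < d" "u' = R u" by (auto simp: dist_commute)
      have "dist ((R ^^ Suc n) u) ((R ^^ Suc n) w) < e" using d(2) u(1,2) by blast
      then show "dist ((R ^^ n) u') ((R ^^ n) w') < e"
        using u(3) w(2) by (simp only: funpow_Suc_right comp_def)
    qed
  qed
  then show ?thesis using open_map[OF U(1)] U(2) fatou_set_iff by blast
qed

lemma julia_set_image: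
  assumes cont: "continuous_on UNIV R" and x: "x \<in> julia_set R"
  shows "R x \<in> julia_set R"
proof (rule ccontr)
  assume "R x \<notin> julia_set R"
  then obtain U where U: "open U" "R x \<in> U" "equicontinuous_iterates R U"
    using fatou_set_iff by (auto simp: julia_set_def)
  have "equicontinuous_iterates R (R -` U)"
    unfolding equicontinuous_iterates_def
  proof (intro ballI allI impI)
    fix w e assume "w \<in> R -` U" and e: "(0::real) < e"
    then obtain d where d: "d > 0" "\<And>n u. u \<in> U \<Longrightarrow> dist u (R w) < d \<Longrightarrow> dist ((R ^^ n) u) ((R ^^ n) (R w)) < e"
      using U(3) e unfolding equicontinuous_iterates_def by blast
    obtain d' where d': "d' > 0" "\<And>u. dist u w < d' \<Longrightarrow> dist (R u) (R w) < d"
      using cont d(1) unfolding continuous_on_iff by blast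
    show "\<exists>d>0. \<forall>n. \<forall>u\<in>R -` U. dist u w < d \<longrightarrow> dist ((R ^^ n) u) ((R ^^ n) w) < e"
    proof (intro exI[of _ "min d' e"] conjI allI ballI impI)
      fix n u assume u: "u \<in> R -` U" "dist u w < min d' e"
      show "dist ((R ^^ n) u) ((R ^^ n) w) < e"
      proof (cases n)
        case 0
        then show ?thesis using u by simp
      next
        case (Suc m)
        have "dist ((R ^^ m) (R u)) ((R ^^ m) (R w)) < e" using u d(2) d'(2) by simp
        then show ?thesis using Suc by (simp only: funpow_Suc_right comp_def)
      qed
    qed (use d'(1) e in simp)
  qed
  then have "x \<in> fatou_set R"
    using open_vimage[OF U(1) cont] U(2) fatou_set_iff by blast
  then show False using x by (simp add: julia_set_def)
qed

lemma Xcirc_image: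
  assumes "\<And>x. x \<in> X \<Longrightarrow> R x \<in> X" and x: "x \<in> Xcirc R X"
  shows "R x \<in> Xcirc R X"
proof -
  have "grand_orbit_rel R x b" if Rx: "grand_orbit_rel R (R x) b" for b
  proof -
    obtain m n where "(R ^^ m) (R x) = (R ^^ n) b" using Rx unfolding grand_orbit_rel_def by blast
    then have "(R ^^ Suc m) x = (R ^^ n) b" by (simp only: funpow_Suc_right comp_def)
    then show ?thesis unfolding grand_orbit_rel_def by blast
  qed
  then show ?thesis using assms by (auto simp: Xcirc_def)
qed

lemma Xcirc_not_branch_point:
  assumes "x \<in> Xcirc R X" shows "\<not> branch_point R x"
proof
  assume "branch_point R x"
  then have "x \<in> special_points R" unfolding special_points_def by (intro CollectI exI[of _ 1]) simp
  moreover have "grand_orbit_rel R x x" unfolding grand_orbit_rel_def by (intro exI[of _ 0]) simp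
  ultimately show False using assms by (auto simp: Xcirc_def)
qed

section \<open>Bounded operators on \<open>\<ell>\<^sup>2\<close> vanishing on the standard basis\<close>

definition vec_restrict :: "('a \<Rightarrow> complex) \<Rightarrow> 'a set \<Rightarrow> 'a \<Rightarrow> complex" where
  "vec_restrict v T = (\<lambda>y. if y \<in> T then v y else 0)"

lemma ell2_finite_support:
  assumes "finite F" "F \<subseteq> S" "\<And>y. y \<notin> F \<Longrightarrow> v y = 0"
  shows "v \<in> ell2 S"
proof -
  have "(\<lambda>x. (cmod (v x))\<^sup>2) summable_on S \<longleftrightarrow> (\<lambda>x. (cmod (v x))\<^sup>2) summable_on F"
    by (rule summable_on_cong_neutral) (use assms in auto)
  then show ?thesis using assms unfolding ell2_def by auto
qed

lemma basis_vec_in_ell2: "x \<in> S \<Longrightarrow> basis_vec x \<in> ell2 S"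
  by (rule ell2_finite_support[of "{x}"]) (auto simp: basis_vec_def)

lemma vec_restrict_in_ell2:
  assumes "v \<in> ell2 S" "T \<subseteq> S"
  shows "vec_restrict v T \<in> ell2 S"
proof -
  have "(\<lambda>y. (cmod (v y))\<^sup>2) summable_on T"
    using assms summable_on_subset_banach by (auto simp: ell2_def)
  moreover have "(\<lambda>y. (cmod (vec_restrict v T y))\<^sup>2) summable_on S \<longleftrightarrow> (\<lambda>y. (cmod (v y))\<^sup>2) summable_on T"
    by (rule summable_on_cong_neutral) (use assms(2) in \<open>auto simp: vec_restrict_def\<close>)
  ultimately show ?thesis using assms(2) by (auto simp: ell2_def vec_restrict_def)
qed

lemma ell2_norm_vec_restrict:
  "T \<subseteq> S \<Longrightarrow> ell2_norm S (vec_restrict v T) = sqrt (infsum (\<lambda>y. (cmod (v y))\<^sup>2) T)"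
  unfolding ell2_norm_def by (rule arg_cong[where f = sqrt], rule infsum_cong_neutral)
    (auto simp: vec_restrict_def)

lemma ell2_norm_tail_small:
  assumes v: "v \<in> ell2 S" and \<epsilon>: "\<epsilon> > 0"
  obtains F where "finite F" "F \<subseteq> S" "ell2_norm S (vec_restrict v (S - F)) \<le> \<epsilon>"
proof -
  define g where "g = (\<lambda>y. (cmod (v y))\<^sup>2)"
  have g: "g summable_on S" using v by (simp add: ell2_def g_def)
  obtain F where F: "finite F" "F \<subseteq> S" "dist (sum g F) (infsum g S) \<le> \<epsilon>\<^sup>2"
    using infsum_finite_approximation[OF g] \<epsilon> by (metis zero_less_power)
  have "infsum g S = infsum g (F \<union> (S - F))" using F(2) by (simp add: Un_absorb1)
  also have "\<dots> = sum g F + infsum g (S - F)"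
    using F(1) summable_on_subset_banach[OF g, of "S - F"] by (subst infsum_Un_disjoint) auto
  finally have "infsum g (S - F) \<le> \<epsilon>\<^sup>2" using F(3) by (simp add: dist_real_def)
  then have "sqrt (infsum g (S - F)) \<le> \<epsilon>" using \<epsilon> real_le_lsqrt by auto
  then show ?thesis using that F(1,2) by (simp add: ell2_norm_vec_restrict g_def)
qed

lemma ell2_norm_nonneg: "ell2_norm S v \<ge> 0"
  by (simp add: ell2_norm_def infsum_nonneg)

lemma ell2_norm_eq_0D:
  assumes v: "v \<in> ell2 S" and "ell2_norm S v = 0"
  shows "v = (\<lambda>_. 0)"
proof
  fix y
  have s: "(\<lambda>y. (cmod (v y))\<^sup>2) summable_on S" using v by (simp add: ell2_def)
  have "infsum (\<lambda>y. (cmod (v y))\<^sup>2) S \<le> 0"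
    using assms(2) infsum_nonneg[of S "\<lambda>y. (cmod (v y))\<^sup>2"] by (simp add: ell2_norm_def)
  then have "y \<in> S \<Longrightarrow> (cmod (v y))\<^sup>2 = 0" using nonneg_infsum_le_0D[OF _ s] by simp
  then show "v y = 0" using v by (cases "y \<in> S") (auto simp: ell2_def)
qed

lemma bounded_op_add:
  "bounded_op S \<alpha> \<Longrightarrow> v \<in> ell2 S \<Longrightarrow> w \<in> ell2 S \<Longrightarrow> \<alpha> (\<lambda>x. v x + w x) = (\<lambda>x. \<alpha> v x + \<alpha> w x)"
  by (simp add: bounded_op_def)

lemma bounded_op_mult:
  "bounded_op S \<alpha> \<Longrightarrow> v \<in> ell2 S \<Longrightarrow> \<alpha> (\<lambda>x. c * v x) = (\<lambda>x. c * \<alpha> v x)"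
  by (simp add: bounded_op_def)

lemma bounded_op_zero: "bounded_op S \<alpha> \<Longrightarrow> \<alpha> (\<lambda>_. 0) = (\<lambda>_. 0)"
  using bounded_op_mult[of S \<alpha> "\<lambda>_. 0" 0] ell2_finite_support[of "{}" S "\<lambda>_. 0"] by simp

lemma bounded_op_vec_restrict_finite:
  assumes \<alpha>: "bounded_op S \<alpha>" "\<And>x. x \<in> S \<Longrightarrow> \<alpha> (basis_vec x) = (\<lambda>_. 0)"
    and "finite F" "F \<subseteq> S"
  shows "\<alpha> (vec_restrict v F) = (\<lambda>_. 0)"
  using assms(3,4)
proof (induction F rule: finite_induct)
  case empty
  then show ?case using bounded_op_zero[OF \<alpha>(1)] by (simp add: vec_restrict_def)
next
  case (insert a F)
  have a: "a \<in> S" and F: "F \<subseteq> S" using insert.prems by auto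
  have "vec_restrict v (insert a F) = (\<lambda>y. v a * basis_vec a y + vec_restrict v F y)"
    using insert.hyps by (auto simp: vec_restrict_def basis_vec_def)
  moreover have "(\<lambda>y. v a * basis_vec a y) \<in> ell2 S" "vec_restrict v F \<in> ell2 S"
    by (rule ell2_finite_support[of "{a}"], use a in \<open>auto simp: basis_vec_def\<close>)
       (rule ell2_finite_support[of F], use insert.hyps F in \<open>auto simp: vec_restrict_def\<close>)
  ultimately show ?case
    using bounded_op_add[OF \<alpha>(1)] bounded_op_mult[OF \<alpha>(1) basis_vec_in_ell2[OF a]] \<alpha>(2)[OF a]
      insert.IH[OF F] by simp
qed

lemma bounded_op_eq_0_if_basis_vec:
  assumes \<alpha>: "bounded_op S \<alpha>" "\<And>x. x \<in> S \<Longrightarrow> \<alpha> (basis_vec x) = (\<lambda>_. 0)" and v: "v \<in> ell2 S"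
  shows "\<alpha> v = (\<lambda>_. 0)"
proof -
  obtain C where C: "\<And>w. w \<in> ell2 S \<Longrightarrow> ell2_norm S (\<alpha> w) \<le> C * ell2_norm S w"
    using \<alpha>(1) unfolding bounded_op_def by blast
  have "ell2_norm S (\<alpha> v) \<le> 0 + \<delta>" if \<delta>: "\<delta> > 0" for \<delta>
  proof -
    have "\<delta> / (\<bar>C\<bar> + 1) > 0" using \<delta> by (simp add: add_nonneg_pos)
    then obtain F where F: "finite F" "F \<subseteq> S"
      and tail: "ell2_norm S (vec_restrict v (S - F)) \<le> \<delta> / (\<bar>C\<bar> + 1)"
      by (rule ell2_norm_tail_small[OF v])
    have tail_ell2: "vec_restrict v (S - F) \<in> ell2 S" using vec_restrict_in_ell2[OF v] by blast
    have "v = (\<lambda>y. vec_restrict v F y + vec_restrict v (S - F) y)"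
      using v F(2) by (auto simp: vec_restrict_def ell2_def)
    then have "\<alpha> v = \<alpha> (vec_restrict v (S - F))"
      using bounded_op_add[OF \<alpha>(1) vec_restrict_in_ell2[OF v F(2)] tail_ell2]
        bounded_op_vec_restrict_finite[OF \<alpha> F] by simp
    then have "ell2_norm S (\<alpha> v) \<le> C * ell2_norm S (vec_restrict v (S - F))"
      using C[OF tail_ell2] by simp
    also have "\<dots> \<le> \<bar>C\<bar> * ell2_norm S (vec_restrict v (S - F))"
      by (rule mult_right_mono) (simp_all add: ell2_norm_nonneg)
    also have "\<dots> \<le> \<bar>C\<bar> * (\<delta> / (\<bar>C\<bar> + 1))" using tail by (intro mult_left_mono) auto
    also have "\<dots> \<le> \<delta>" using \<delta> by (simp add: field_simps)
    finally show ?thesis by simp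
  qed
  then have "ell2_norm S (\<alpha> v) \<le> 0" by (rule field_le_epsilon)
  then have "ell2_norm S (\<alpha> v) = 0" using ell2_norm_nonneg[of S "\<alpha> v"] by linarith
  moreover have "\<alpha> v \<in> ell2 S" using \<alpha>(1) v by (simp add: bounded_op_def)
  ultimately show ?thesis using ell2_norm_eq_0D by blast
qed

section \<open>Localizing basis vectors with bump functions\<close>

lemma closed_or_open_dynamical_set:
  "X = julia_set R \<or> X = fatou_set R \<or> X = UNIV \<Longrightarrow> closed X \<or> open X"
  using closed_julia_set open_fatou_set by auto

lemma compact_cball_Int:
  fixes x :: "'a::metric_space"
  assumes "compact (UNIV :: 'a set)" "closed X \<or> open X" "x \<in> X" "open U" "x \<in> U"
  obtains r where "r > 0" "cball x r \<subseteq> U" "compact (cball x r \<inter> X)"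
proof -
  have "open (U \<inter> (if open X then X else UNIV))" using assms(4) by auto
  moreover have "x \<in> U \<inter> (if open X then X else UNIV)" using assms(3,5) by auto
  ultimately obtain r where r: "r > 0" "cball x r \<subseteq> U \<inter> (if open X then X else UNIV)"
    unfolding open_contains_cball by blast
  have "compact (cball x r)" using compact_Int_closed[OF assms(1) closed_cball] by simp
  then have "compact (cball x r \<inter> X)"
    using assms(2) r(2) compact_Int_closed by (cases "open X") (auto simp: Int_absorb2)
  then show ?thesis using that r by auto
qed

lemma tent_in_C0:
  fixes x :: "'a::metric_space"
  assumes r: "r > 0" and compact: "compact (cball x r \<inter> X)"
  shows "(\<lambda>y. complex_of_real (max 0 (1 - dist y x / r))) \<in> C0 X"
  unfolding C0_def
proof (intro CollectI conjI allI impI)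
  show "continuous_on X (\<lambda>y. complex_of_real (max 0 (1 - dist y x / r)))"
    using r by (intro continuous_intros) auto
  fix e :: real assume e: "e > 0"
  have "cmod (complex_of_real (max 0 (1 - dist y x / r))) < e" if "y \<notin> cball x r" for y
  proof -
    have "dist y x / r > 1" using that r by (simp add: dist_commute)
    then show ?thesis using e by simp
  qed
  then show "\<exists>K. compact K \<and> K \<subseteq> X \<and> (\<forall>y\<in>X - K. cmod (complex_of_real (max 0 (1 - dist y x / r))) < e)"
    using compact by (intro exI[of _ "cball x r \<inter> X"]) auto
qed

lemma rhoE_basis_vec_image:
  assumes "x \<in> S" "f x = 1" "\<And>y. y \<in> S \<Longrightarrow> y \<noteq> x \<Longrightarrow> R y = R x \<Longrightarrow> f y = 0"
  shows "rhoE R S f (basis_vec (R x)) = basis_vec x"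
  using assms by (auto simp: rhoE_def basis_vec_def)

context rational_map
begin

lemma rat_map_in_dynamical_set:
  assumes "X = julia_set R \<or> X = fatou_set R \<or> X = UNIV" "x \<in> X"
  shows "R x \<in> X"
  using assms(1)
proof (elim disjE)
  assume "X = julia_set R"
  then show ?thesis using julia_set_image[OF continuous_on_rat_map] assms(2) by simp
next
  assume "X = fatou_set R"
  then show ?thesis using fatou_set_image[OF open_image_rat_map] assms(2) by simp
qed (use assms(2) in simp)

lemma exists_C0_rhoE_basis_vec:
  assumes X: "X = julia_set R \<or> X = fatou_set R \<or> X = UNIV" and x: "x \<in> Xcirc R X"
  obtains f where "f \<in> C0 X" "rhoE R (Xcirc R X) f (basis_vec (R x)) = basis_vec x"
proof -
  obtain U where U: "open U" "x \<in> U" "inj_on R U"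
    using Xcirc_not_branch_point[OF x] unfolding branch_point_def by blast
  have "x \<in> X" using x by (simp add: Xcirc_def)
  then obtain r where r: "r > 0" "cball x r \<subseteq> U" "compact (cball x r \<inter> X)"
    by (rule compact_cball_Int[OF compact_UNIV_rsphere closed_or_open_dynamical_set[OF X] _ U(1,2)])
  define f where "f y = complex_of_real (max 0 (1 - dist y x / r))" for y
  have "f \<in> C0 X" using tent_in_C0[OF r(1,3)] by (simp add: f_def[abs_def])
  moreover have "rhoE R (Xcirc R X) f (basis_vec (R x)) = basis_vec x"
  proof (rule rhoE_basis_vec_image[OF x])
    show "f x = 1" using r(1) by (simp add: f_def)
    fix y assume y: "y \<noteq> x" "R y = R x"
    show "f y = 0"
    proof (cases "dist y x < r")
      case True
      then have "y \<in> U" using r(2) by (auto simp: dist_commute)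
      then show ?thesis using inj_onD[OF U(3) y(2) _ U(2)] y(1) by blast
    next
      case False
      then show ?thesis using r(1) by (simp add: f_def)
    qed
  qed
  ultimately show ?thesis using that by blast
qed

end

theorem lemma3p1p2:
  fixes p q :: "complex poly" and X :: "rsphere set"
    and \<alpha> :: "(rsphere \<Rightarrow> complex) \<Rightarrow> (rsphere \<Rightarrow> complex)"
  assumes "q \<noteq> 0" and "coprime p q" and "rat_degree p q \<ge> 2"
    and "X = julia_set (rat_map p q) \<or> X = fatou_set (rat_map p q) \<or> X = UNIV"
    and "X \<noteq> {}"
    and "bounded_op (Xcirc (rat_map p q) X) \<alpha>"
    and "\<forall>f\<in>C0 X. \<forall>v\<in>ell2 (Xcirc (rat_map p q) X).
           \<alpha> (rhoE (rat_map p q) (Xcirc (rat_map p q) X) f v) = (\<lambda>_. 0)"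
  shows "\<forall>v\<in>ell2 (Xcirc (rat_map p q) X). \<alpha> v = (\<lambda>_. 0)"
proof
  interpret rational_map p q using assms(1-3) by unfold_locales
  fix v assume v: "v \<in> ell2 (Xcirc R X)"
  show "\<alpha> v = (\<lambda>_. 0)"
  proof (rule bounded_op_eq_0_if_basis_vec[OF assms(6) _ v])
    fix x assume x: "x \<in> Xcirc R X"
    obtain f where f: "f \<in> C0 X" "rhoE R (Xcirc R X) f (basis_vec (R x)) = basis_vec x"
      using exists_C0_rhoE_basis_vec[OF assms(4) x] .
    have "basis_vec (R x) \<in> ell2 (Xcirc R X)"
      using Xcirc_image[OF rat_map_in_dynamical_set[OF assms(4)] x] by (rule basis_vec_in_ell2)
    then have "\<alpha> (rhoE R (Xcirc R X) f (basis_vec (R x))) = (\<lambda>_. 0)" using assms(7) f(1) by blast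
    then show "\<alpha> (basis_vec x) = (\<lambda>_. 0)" by (simp only: f(2))
  qed
qed

end
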